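(* Let $G$ be a simple graph of order $n$ with adjacency eigenvalues $\lambda_1,\lambda_2,\dots,\lambda_n$ (listed with multiplicity), and let $G^l$ be the graph obtained from $G$ by adding a loop on each vertex of $G$. Let $p$ and $q$ be non-negative integers with $m=p+q\ge 1$, and let $(pG\cup qG^l)_{qn}$ denote the disjoint union of $p$ copies of $G$ and $q$ copies of $G^l$, a graph of order $mn$ with exactly $qn$ self-loops. If $|\lambda_i|\ge \max\left(\frac{p}{m},\frac{q}{m}\right)$ for each $i=1,2,\dots,n$, then $E\big((pG\cup qG^l)_{qn}\big)=mE(G)$.
   Context: For a simple graph $G$ with adjacency matrix $A(G)$ and eigenvalues $\lambda_1,\dots,\lambda_n$, the energy is $E(G)=\sum_{i=1}^n|\lambda_i|$. For a graph $G_\sigma$ of order $N$ obtained from a simple graph by attaching self-loops on $\sigma$ of its vertices, the adjacency matrix is $A(G_\sigma)=A(G)+I_\sigma$, where $I_\sigma$ is the $N\times N$ diagonal matrix with exactly $\sigma$ ones on the diagonal (at the looped vertices) and zeros elsewhere; if $\mu_1,\dots,\mu_N$ are the eigenvalues of $A(G_\sigma)$, its energy is $E(G_\sigma)=\sum_{i=1}^N\left|\mu_i-\frac{\sigma}{N}\right|$. The subscript in $(pG\cup qG^l)_{qn}$ indicates the number of loops $\sigma=qn$. *)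

theory Defs
  imports Complex_Main "Jordan_Normal_Form.Char_Poly" "HOL-Computational_Algebra.Polynomial"
begin

definition simple_graph_adj :: "nat \<Rightarrow> real mat \<Rightarrow> bool" where
  "simple_graph_adj n A \<longleftrightarrow> A \<in> carrier_mat n n \<and>
     (\<forall>i<n. \<forall>j<n. A $$ (i,j) = 0 \<or> A $$ (i,j) = 1) \<and>
     (\<forall>i<n. A $$ (i,i) = 0) \<and>
     (\<forall>i<n. \<forall>j<n. A $$ (i,j) = A $$ (j,i))"

definition eigvals :: "real mat \<Rightarrow> complex multiset" where
  "eigvals A = proots (map_poly complex_of_real (char_poly A))"

definition graph_energy :: "real mat \<Rightarrow> real" where
  "graph_energy A = sum_mset (image_mset cmod (eigvals A))"

text \<open>Energy of a graph with sigma self-loops, order N = dim_row M.\<close>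
definition loop_energy :: "real mat \<Rightarrow> nat \<Rightarrow> real" where
  "loop_energy M \<sigma> = sum_mset (image_mset (\<lambda>\<mu>. cmod (\<mu> - complex_of_real (real \<sigma> / real (dim_row M)))) (eigvals M))"

definition add_loops :: "real mat \<Rightarrow> real mat" where
  "add_loops A = A + 1\<^sub>m (dim_row A)"

text \<open>Adjacency matrix of a disjoint union: block diagonal matrix.\<close>
fun block_diag :: "real mat list \<Rightarrow> real mat" where
  "block_diag [] = 0\<^sub>m 0 0"
| "block_diag (B # Bs) = (let R = block_diag Bs in
     four_block_mat B (0\<^sub>m (dim_row B) (dim_col R)) (0\<^sub>m (dim_row R) (dim_col B)) R)"

definition union_pG_qGl :: "nat \<Rightarrow> nat \<Rightarrow> real mat \<Rightarrow> real mat" where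
  "union_pG_qGl p q A = block_diag (replicate p A @ replicate q (add_loops A))"

end

theory Submission
  imports Defs
begin

text \<open>
  The adjacency matrix of \<open>(pG \<union> qG\<^sup>l)\<close> is block diagonal with \<open>p\<close> blocks \<open>A\<close> and \<open>q\<close> blocks
  \<open>A + I\<close>, so its spectrum consists of every eigenvalue \<open>\<lambda>\<close> of \<open>G\<close> taken \<open>p\<close> times and every
  \<open>\<lambda> + 1\<close> taken \<open>q\<close> times, and the loop shift \<open>\<sigma>/N\<close> is \<open>q/m\<close>. The eigenvalues are real since
  \<open>A\<close> is symmetric, and \<open>|\<lambda>| \<ge> max (p/m) (q/m)\<close> forces \<open>\<lambda> - q/m\<close> and \<open>\<lambda> + 1 - q/m = \<lambda> + p/m\<close>
  to have the sign of \<open>\<lambda>\<close>. Hence \<open>p |\<lambda> - q/m| + q |\<lambda> + p/m| = m |\<lambda>|\<close>, and summing over the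
  eigenvalues of \<open>G\<close> gives \<open>m E(G)\<close>.
\<close>

lemma char_poly_four_block_diag:
  fixes B C :: "'a :: idom mat"
  assumes B: "B \<in> carrier_mat k k" and C: "C \<in> carrier_mat l l"
  shows "char_poly (four_block_mat B (0\<^sub>m k l) (0\<^sub>m l k) C) = char_poly B * char_poly C"
proof -
  let ?cm = "\<lambda>A. [:0, 1:] \<cdot>\<^sub>m 1\<^sub>m (dim_row A) + map_mat (\<lambda>a. [:- a:]) A"
  have "char_poly (four_block_mat B (0\<^sub>m k l) (0\<^sub>m l k) C)
      = det (?cm (four_block_mat B (0\<^sub>m k l) (0\<^sub>m l k) C))"
    unfolding char_poly_defs ..
  also have "?cm (four_block_mat B (0\<^sub>m k l) (0\<^sub>m l k) C)
      = four_block_mat (?cm B) (0\<^sub>m k l) (0\<^sub>m l k) (?cm C)"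
    using B C by (intro eq_matI) auto
  also have "det \<dots> = det (?cm B) * det (?cm C)"
    using B C by (intro det_four_block_mat_lower_left_zero[OF _ _ refl]) auto
  also have "\<dots> = char_poly B * char_poly C"
    unfolding char_poly_defs ..
  finally show ?thesis .
qed

lemma char_poly_add_scalar_mat:
  fixes A :: "'a :: field_char_0 mat"
  assumes A: "A \<in> carrier_mat n n"
  shows "char_poly (A + c \<cdot>\<^sub>m 1\<^sub>m n) = char_poly A \<circ>\<^sub>p [:- c, 1:]"
proof -
  have AC: "A + c \<cdot>\<^sub>m 1\<^sub>m n \<in> carrier_mat n n"
    using A by simp
  have "poly (char_poly (A + c \<cdot>\<^sub>m 1\<^sub>m n)) x = poly (char_poly A \<circ>\<^sub>p [:- c, 1:]) x" for x
  proof -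
    have "char_matrix (A + c \<cdot>\<^sub>m 1\<^sub>m n) x = char_matrix A (x - c)"
      using A by (intro eq_matI) (auto simp: char_matrix_def algebra_simps)
    then show ?thesis
      unfolding char_poly_matrix[OF AC] char_poly_matrix[OF A] poly_pcompose by simp
  qed
  then show ?thesis
    by (simp add: poly_eq_poly_eq_iff[symmetric] fun_eq_iff)
qed

lemma char_poly_nonzero: "A \<in> carrier_mat n n \<Longrightarrow> char_poly A \<noteq> 0"
  using degree_monic_char_poly[of A n] by auto

lemma proots_linear_factors:
  "proots (\<Prod>a\<leftarrow>as. [:- a, 1:]) = mset (as :: 'a :: idom list)"
proof (induction as)
  case (Cons a as)
  have "(\<Prod>a\<leftarrow>as. [:- a, 1:]) \<noteq> (0 :: 'a poly)"
    by (auto simp: prod_list_zero_iff)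
  then show ?case
    by (simp add: proots_mult Cons.IH del: mult_pCons_left)
qed simp

lemma pcompose_linear_factors:
  "(\<Prod>a\<leftarrow>as. [:- a, 1:]) \<circ>\<^sub>p [:- c, 1:] = (\<Prod>a\<leftarrow>as. [:- (a + c), 1 :: 'a :: comm_ring_1:])"
  by (induction as) (simp_all add: pcompose_mult pcompose_pCons del: mult_pCons_left)

lemma proots_pcompose_shift:
  fixes p :: "complex poly"
  assumes "p \<noteq> 0"
  shows "proots (p \<circ>\<^sub>p [:- c, 1:]) = image_mset (\<lambda>z. z + c) (proots p)"
proof -
  obtain as where p: "p = Polynomial.smult (lead_coeff p) (\<Prod>a\<leftarrow>as. [:- a, 1:])"
    using fundamental_theorem_algebra_factorized[of p] by metis
  have lc: "lead_coeff p \<noteq> 0"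
    using assms by simp
  have "p \<circ>\<^sub>p [:- c, 1:]
      = Polynomial.smult (lead_coeff p) (\<Prod>a\<leftarrow>map (\<lambda>z. z + c) as. [:- a, 1:])"
    by (subst p) (simp add: pcompose_smult pcompose_linear_factors o_def)
  then have "proots (p \<circ>\<^sub>p [:- c, 1:]) = mset (map (\<lambda>z. z + c) as)"
    by (simp only: proots_smult[OF lc] proots_linear_factors)
  moreover have "proots p = mset as"
    using arg_cong[OF p, of proots] lc by (simp add: proots_linear_factors)
  ultimately show ?thesis
    by simp
qed

lemma size_eigvals:
  assumes "A \<in> carrier_mat n n"
  shows "size (eigvals A) = n"
proof -
  have "degree (char_poly A) = n"
    using degree_monic_char_poly[OF assms] ..
  then show ?thesis
    unfolding eigvals_def size_proots_complex of_real_hom.degree_map_poly_hom .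
qed

lemma eigvals_four_block_diag:
  assumes B: "B \<in> carrier_mat k k" and C: "C \<in> carrier_mat l l"
  shows "eigvals (four_block_mat B (0\<^sub>m k l) (0\<^sub>m l k) C) = eigvals B + eigvals C"
proof -
  interpret of_real_poly: map_poly_idom_hom "of_real :: real \<Rightarrow> complex" ..
  show ?thesis
    unfolding eigvals_def char_poly_four_block_diag[OF B C] of_real_poly.hom_mult
    using char_poly_nonzero[OF B] char_poly_nonzero[OF C] by (simp add: proots_mult)
qed

lemma dim_block_diag:
  "dim_row (block_diag Bs) = (\<Sum>B\<leftarrow>Bs. dim_row B)"
  "dim_col (block_diag Bs) = (\<Sum>B\<leftarrow>Bs. dim_col B)"
  by (induction Bs) (simp_all add: Let_def)

lemma eigvals_block_diag:
  assumes "\<forall>B\<in>set Bs. square_mat B"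
  shows "eigvals (block_diag Bs) = (\<Sum>B\<leftarrow>Bs. eigvals B)"
  using assms
proof (induction Bs)
  case Nil
  show ?case
    using size_eigvals[of "0\<^sub>m 0 0" 0] by simp
next
  case (Cons B Bs)
  let ?R = "block_diag Bs"
  have B: "B \<in> carrier_mat (dim_row B) (dim_row B)" and Bs: "\<forall>C\<in>set Bs. square_mat C"
    using Cons.prems by auto
  then have "map dim_col Bs = map dim_row Bs"
    by auto
  then have "dim_col ?R = dim_row ?R"
    by (simp only: dim_block_diag)
  then have R: "?R \<in> carrier_mat (dim_row ?R) (dim_row ?R)"
    by (rule carrier_matI[OF refl])
  have "block_diag (B # Bs)
      = four_block_mat B (0\<^sub>m (dim_row B) (dim_row ?R)) (0\<^sub>m (dim_row ?R) (dim_row B)) ?R"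
    using carrier_matD(2)[OF B] carrier_matD(2)[OF R] by (simp only: block_diag.simps Let_def)
  then show ?case
    using Cons.IH[OF Bs] eigvals_four_block_diag[OF B R] by simp
qed

lemma eigvals_add_scalar_mat:
  assumes "A \<in> carrier_mat n n"
  shows "eigvals (A + c \<cdot>\<^sub>m 1\<^sub>m n) = image_mset (\<lambda>z. z + of_real c) (eigvals A)"
  unfolding eigvals_def char_poly_add_scalar_mat[OF assms] of_real_hom.map_poly_pcompose
  using char_poly_nonzero[OF assms] by (simp add: proots_pcompose_shift)

lemma eigvals_add_loops:
  assumes "A \<in> carrier_mat n n"
  shows "eigvals (add_loops A) = image_mset (\<lambda>z. z + 1) (eigvals A)"
proof -
  have "add_loops A = A + 1 \<cdot>\<^sub>m 1\<^sub>m n"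
    using assms unfolding add_loops_def by (intro eq_matI) auto
  then show ?thesis
    using eigvals_add_scalar_mat[OF assms, of 1] by simp
qed

lemma dim_row_union_pG_qGl:
  "A \<in> carrier_mat n n \<Longrightarrow> dim_row (union_pG_qGl p q A) = (p + q) * n"
  by (simp add: union_pG_qGl_def dim_block_diag add_loops_def sum_list_replicate algebra_simps)

lemma eigvals_union_pG_qGl:
  assumes "A \<in> carrier_mat n n"
  shows "eigvals (union_pG_qGl p q A)
    = repeat_mset p (eigvals A) + repeat_mset q (image_mset (\<lambda>z. z + 1) (eigvals A))"
proof -
  have repeat: "sum_list (replicate k X) = repeat_mset k X" for k and X :: "complex multiset"
    by (induction k) auto
  have "\<forall>B\<in>set (replicate p A @ replicate q (add_loops A)). square_mat B"
    using assms by (auto simp: add_loops_def)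
  then show ?thesis
    unfolding union_pG_qGl_def
    by (simp add: eigvals_block_diag eigvals_add_loops[OF assms] repeat)
qed

lemma real_symmetric_form_real:
  fixes A :: "real mat" and v :: "complex vec"
  assumes sym: "\<forall>i<n. \<forall>j<n. A $$ (i, j) = A $$ (j, i)"
  shows "Im (\<Sum>i<n. cnj (v $ i) * (\<Sum>j<n. of_real (A $$ (i, j)) * v $ j)) = 0"
proof -
  define s where "s = (\<Sum>i<n. cnj (v $ i) * (\<Sum>j<n. of_real (A $$ (i, j)) * v $ j))"
  have "cnj s = (\<Sum>i<n. \<Sum>j<n. v $ i * (of_real (A $$ (i, j)) * cnj (v $ j)))"
    unfolding s_def by (simp add: sum_distrib_left)
  also have "\<dots> = (\<Sum>j<n. \<Sum>i<n. v $ i * (of_real (A $$ (i, j)) * cnj (v $ j)))"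
    by (rule sum.swap)
  also have "\<dots> = s"
    unfolding s_def sum_distrib_left using sym by (auto intro!: sum.cong simp: algebra_simps)
  finally have "Im (cnj s) = Im s"
    by simp
  then have "Im s = 0"
    by simp
  then show ?thesis
    by (simp only: s_def)
qed

lemma real_symmetric_eigenvalue_real:
  fixes A :: "real mat"
  assumes A: "A \<in> carrier_mat n n" and sym: "\<forall>i<n. \<forall>j<n. A $$ (i, j) = A $$ (j, i)"
    and ev: "eigenvector (map_mat complex_of_real A) v z"
  shows "Im z = 0"
proof -
  have v: "v \<in> carrier_vec n" "v \<noteq> 0\<^sub>v n" "map_mat complex_of_real A *\<^sub>v v = z \<cdot>\<^sub>v v"
    using ev A unfolding eigenvector_def by auto
  have row: "(\<Sum>j<n. of_real (A $$ (i, j)) * v $ j) = z * v $ i" if "i < n" for i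
  proof -
    have "(map_mat complex_of_real A *\<^sub>v v) $ i = (\<Sum>j<n. of_real (A $$ (i, j)) * v $ j)"
      using that A v(1) by (auto simp: scalar_prod_def lessThan_atLeast0 intro!: sum.cong)
    then show ?thesis
      using v(1,3) that by simp
  qed
  define N where "N = (\<Sum>i<n. (cmod (v $ i))\<^sup>2)"
  obtain i where "i < n" "v $ i \<noteq> 0"
    using v(1,2) by (metis eq_vecI carrier_vecD index_zero_vec)
  then have "N > 0"
    unfolding N_def by (intro sum_pos2[of _ i]) auto
  have "(\<Sum>i<n. cnj (v $ i) * (\<Sum>j<n. of_real (A $$ (i, j)) * v $ j))
      = (\<Sum>i<n. cnj (v $ i) * (z * v $ i))"
    using row by simp
  also have "\<dots> = of_real N * z"
    unfolding N_def of_real_sum sum_distrib_right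
    by (intro sum.cong refl) (subst complex_norm_square, simp add: algebra_simps)
  finally have "(\<Sum>i<n. cnj (v $ i) * (\<Sum>j<n. of_real (A $$ (i, j)) * v $ j)) = of_real N * z" .
  then have "N * Im z = 0"
    using real_symmetric_form_real[OF sym, of v] by simp
  with \<open>N > 0\<close> show ?thesis
    by simp
qed

lemma eigvals_real_symmetric:
  fixes A :: "real mat"
  assumes A: "A \<in> carrier_mat n n" and sym: "\<forall>i<n. \<forall>j<n. A $$ (i, j) = A $$ (j, i)"
    and z: "z \<in># eigvals A"
  shows "Im z = 0"
proof -
  have "poly (char_poly (map_mat complex_of_real A)) z = 0"
    using z char_poly_nonzero[OF A]
    unfolding eigvals_def of_real_hom.char_poly_hom[OF A] by simp
  then have "eigenvalue (map_mat complex_of_real A) z"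
    using A by (simp add: eigenvalue_root_char_poly)
  then obtain v where "eigenvector (map_mat complex_of_real A) v z"
    unfolding eigenvalue_def by blast
  then show ?thesis
    by (rule real_symmetric_eigenvalue_real[OF A sym])
qed

lemma weighted_abs_shift:
  fixes r s t :: real
  assumes "0 \<le> s" "0 \<le> t" "s + t = 1" "max s t \<le> \<bar>r\<bar>"
  shows "t * \<bar>r - s\<bar> + s * \<bar>r + t\<bar> = \<bar>r\<bar>"
proof (cases "0 \<le> r")
  case True
  then have "\<bar>r - s\<bar> = r - s" "\<bar>r + t\<bar> = r + t" "\<bar>r\<bar> = r"
    using assms by auto
  moreover have "t * (r - s) + s * (r + t) = (s + t) * r"
    by (simp add: algebra_simps)
  ultimately show ?thesis
    using \<open>s + t = 1\<close> by simp
next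
  case False
  then have "\<bar>r - s\<bar> = s - r" "\<bar>r + t\<bar> = - (r + t)" "\<bar>r\<bar> = - r"
    using assms by auto
  moreover have "t * (s - r) + s * - (r + t) = - ((s + t) * r)"
    by (simp add: algebra_simps)
  ultimately show ?thesis
    using \<open>s + t = 1\<close> by simp
qed

lemma loop_energy_contribution:
  fixes p q :: nat and z :: complex
  assumes "p + q \<ge> 1" "Im z = 0"
    and "max (real p / real (p + q)) (real q / real (p + q)) \<le> cmod z"
  shows "real p * cmod (z - of_real (real q / real (p + q)))
      + real q * cmod (z + 1 - of_real (real q / real (p + q))) = real (p + q) * cmod z"
proof -
  define m where "m = real (p + q)"
  define s where "s = real q / m"
  define r where "r = Re z"
  have "m > 0"
    using assms(1) unfolding m_def by simp
  then have p: "real p = m * (1 - s)" and q: "real q = m * s" and "real p / m = 1 - s"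
    unfolding s_def m_def by (simp_all add: field_simps)
  have z: "z = of_real r"
    using assms(2) unfolding r_def by (simp add: complex_eq_iff)
  have zs: "z - of_real s = of_real (r - s)" and zt: "z + 1 - of_real s = of_real (r + (1 - s))"
    unfolding z by simp_all
  have "real p * cmod (z - of_real s) + real q * cmod (z + 1 - of_real s)
      = m * ((1 - s) * \<bar>r - s\<bar> + s * \<bar>r + (1 - s)\<bar>)"
    unfolding p q zs zt norm_of_real by (simp add: algebra_simps)
  also have "\<dots> = m * \<bar>r\<bar>"
    using assms(3) \<open>real p / m = 1 - s\<close> \<open>m > 0\<close>
    by (subst weighted_abs_shift) (simp_all add: z m_def s_def)
  finally show ?thesis
    unfolding m_def s_def z by simp
qed

lemma sum_mset_image_repeat_mset:
  "sum_mset (image_mset f (repeat_mset k X)) = of_nat k * sum_mset (image_mset f X :: 'a :: semiring_1 multiset)"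
  by (induction k) (simp_all add: ring_distribs del: mult_hom.hom_sum_mset)

lemma loop_energy_union_pG_qGl:
  assumes "A \<in> carrier_mat n n"
  shows "loop_energy (union_pG_qGl p q A) \<sigma>
    = real p * (\<Sum>z\<in>#eigvals A. cmod (z - of_real (real \<sigma> / real ((p + q) * n))))
    + real q * (\<Sum>z\<in>#eigvals A. cmod (z + 1 - of_real (real \<sigma> / real ((p + q) * n))))"
proof -
  define c where "c = complex_of_real (real \<sigma> / real ((p + q) * n))"
  show ?thesis
    unfolding loop_energy_def dim_row_union_pG_qGl[OF assms] eigvals_union_pG_qGl[OF assms]
      c_def[symmetric]
    by (simp add: sum_mset_image_repeat_mset multiset.map_comp o_def del: mult_hom.hom_sum_mset)
qed

theorem theorem2:
  fixes n p q :: nat and A :: "real mat"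
  assumes "simple_graph_adj n A"
    and "p + q \<ge> 1"
    and "\<forall>ev\<in>#eigvals A. cmod ev \<ge> max (real p / real (p + q)) (real q / real (p + q))"
  shows "loop_energy (union_pG_qGl p q A) (q * n) = real (p + q) * graph_energy A"
proof -
  have A: "A \<in> carrier_mat n n" and sym: "\<forall>i<n. \<forall>j<n. A $$ (i, j) = A $$ (j, i)"
    using assms(1) unfolding simple_graph_adj_def by auto
  define c where "c = complex_of_real (real (q * n) / real ((p + q) * n))"
  have contribution: "real p * cmod (z - c) + real q * cmod (z + 1 - c) = real (p + q) * cmod z"
    if "z \<in># eigvals A" for z
  proof -
    \<comment> \<open>\<open>c\<close> is \<open>q/(p+q)\<close> only for \<open>n \<noteq> 0\<close> (for \<open>n = 0\<close> the division yields 0)\<close>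
    have "eigvals A \<noteq> {#}"
      using that by auto
    then have "n \<noteq> 0"
      using size_eigvals[OF A] nonempty_has_size by auto
    then show ?thesis
      using loop_energy_contribution[OF assms(2) eigvals_real_symmetric[OF A sym that]] assms(3) that
      unfolding c_def by simp
  qed
  have "loop_energy (union_pG_qGl p q A) (q * n)
      = (\<Sum>z\<in>#eigvals A. real p * cmod (z - c) + real q * cmod (z + 1 - c))"
    unfolding loop_energy_union_pG_qGl[OF A] c_def[symmetric]
    by (simp add: sum_mset.distrib multiset.map_comp o_def)
  also have "\<dots> = (\<Sum>z\<in>#eigvals A. real (p + q) * cmod z)"
    using contribution by (simp cong: image_mset_cong)
  also have "\<dots> = real (p + q) * graph_energy A"
    unfolding graph_energy_def by (simp add: multiset.map_comp o_def)
  finally show ?thesis .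
qed

end
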